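(* Let $\mathcal{C}$ be a $\beta$-avoiding simplicial complex that has an induced subcomplex isomorphic to $C_4$. Then the subcomplex of $\mathcal{C}$ induced on its non-ghost vertices is isomorphic to $\operatorname{cone}^p(C_4)$ for some $p\ge0$.
   Context: A simplicial complex on a finite ground set $V$ is a family of subsets of $V$ closed under subsets; a vertex $v\in V$ is a ghost vertex if $\{v\}\notin\mathcal{C}$, otherwise non-ghost. The induced subcomplex on $W\subseteq V$ is $\{F\in\mathcal{C}:F\subseteq W\}$ on $W$. $C_4$ is the complex on $\{1,2,3,4\}$ with facets $12,23,34,14$. $\operatorname{cone}^p(\mathcal{D})$ is the complex on the ground set of $\mathcal{D}$ together with $p$ new vertices $u_1,\dots,u_p$, with facets $F\cup\{u_1,\dots,u_p\}$ for $F$ a facet of $\mathcal{D}$ ($\operatorname{cone}^0(\mathcal{D})=\mathcal{D}$). For $S\subseteq V$, $\mathcal{C}\setminus S$ is the induced subcomplex on $V\setminus S$; for a face $R$, $\operatorname{link}_R(\mathcal{C})=\{F\setminus R: R\subseteq F\in\mathcal{C}\}$ on $V\setminus R$. A minor is $\operatorname{link}_R(\mathcal{C}\setminus S)$ with $S\cap R=\emptyset$, $R$ a face. $\mathcal{C}$ is $\beta$-avoiding if no minor is isomorphic to any of: $P_4$ (on $\{1,2,3,4\}$, facets $12,23,34$); $O_6$ (on $\{1,\dots,6\}$, faces the subsets containing none of $\{1,2\},\{3,4\},\{5,6\}$) or its Alexander dual $O_6^*$ (Alexander dual of $\mathcal{D}$ on $V$: $\{S\subseteq V: V\setminus S\notin\mathcal{D}\}$);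 $J_1$ (on $\{1,\dots,5\}$, facets $12,15,234,345$) or $J_1^*$ (facets $134,235,245$); $J_2$ (on $\{1,\dots,5\}$, facets $12,235,34,145$); $\partial\Delta_n\sqcup\{v\}$ for $n\ge1$ (all proper subsets of an $(n+1)$-set together with one extra isolated vertex). *)

theory Defs
  imports Main
begin

definition simplicial_complex :: "'a set \<Rightarrow> 'a set set \<Rightarrow> bool" where
  "simplicial_complex V C \<longleftrightarrow> finite V \<and> (\<forall>F\<in>C. F \<subseteq> V) \<and> (\<forall>F\<in>C. \<forall>G. G \<subseteq> F \<longrightarrow> G \<in> C)"

definition cx_iso :: "'a set \<Rightarrow> 'a set set \<Rightarrow> 'b set \<Rightarrow> 'b set set \<Rightarrow> bool" where
  "cx_iso V C W D \<longleftrightarrow> (\<exists>f. bij_betw f V W \<and> (\<forall>F. F \<subseteq> V \<longrightarrow> (F \<in> C \<longleftrightarrow> f ` F \<in> D)))"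

definition induced :: "'a set set \<Rightarrow> 'a set \<Rightarrow> 'a set set" where
  "induced C W = {F \<in> C. F \<subseteq> W}"

definition non_ghost :: "'a set \<Rightarrow> 'a set set \<Rightarrow> 'a set" where
  "non_ghost V C = {v \<in> V. {v} \<in> C}"

text \<open>Minor link_R (C \ S): ground set V - S - R, faces F - R for faces F of C
with F \<subseteq> V - S and R \<subseteq> F; R must be a face of C \ S, S and R disjoint.\<close>
definition is_minor :: "'a set \<Rightarrow> 'a set set \<Rightarrow> 'a set \<Rightarrow> 'a set set \<Rightarrow> bool" where
  "is_minor V C W D \<longleftrightarrow> (\<exists>S R. S \<subseteq> V \<and> R \<subseteq> V - S \<and> R \<in> C \<and>
      W = V - S - R \<and> D = {F - R | F. F \<in> C \<and> F \<subseteq> V - S \<and> R \<subseteq> F})"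

definition gen :: "nat set set \<Rightarrow> nat set set" where
  "gen Fs = {G. \<exists>F\<in>Fs. G \<subseteq> F}"

definition alex_dual :: "'a set \<Rightarrow> 'a set set \<Rightarrow> 'a set set" where
  "alex_dual V D = {S. S \<subseteq> V \<and> V - S \<notin> D}"

definition P4 :: "nat set set" where "P4 = gen {{1,2},{2,3},{3,4}}"
definition C4 :: "nat set set" where "C4 = gen {{1,2},{2,3},{3,4},{1,4}}"
definition O6 :: "nat set set" where
  "O6 = {F. F \<subseteq> {1..6} \<and> \<not> {1,2} \<subseteq> F \<and> \<not> {3,4} \<subseteq> F \<and> \<not> {5,6} \<subseteq> F}"
definition J1 :: "nat set set" where "J1 = gen {{1,2},{1,5},{2,3,4},{3,4,5}}"
definition J1s :: "nat set set" where "J1s = gen {{1,3,4},{2,3,5},{2,4,5}}"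
definition J2 :: "nat set set" where "J2 = gen {{1,2},{2,3,5},{3,4},{1,4,5}}"

text \<open>\<partial>\<Delta>_n \<sqcup> {v}: proper subsets of {0..n} plus isolated vertex n+1, ground set {0..n+1}.\<close>
definition bdry_plus_pt :: "nat \<Rightarrow> nat set set" where
  "bdry_plus_pt n = {F. F \<subset> {0..n}} \<union> {{n+1}}"

text \<open>cone^p(C4) on ground set {1..4+p}, new vertices 5..4+p.\<close>
definition cone_C4 :: "nat \<Rightarrow> nat set set" where
  "cone_C4 p = gen {F \<union> {5..4+p} | F. F \<in> {{1,2},{2,3},{3,4},{1,4}}}"

definition beta_avoiding :: "'a set \<Rightarrow> 'a set set \<Rightarrow> bool" where
  "beta_avoiding V C \<longleftrightarrow> (\<forall>W D. is_minor V C W D \<longrightarrow>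
      \<not> cx_iso W D {1..4} P4 \<and>
      \<not> cx_iso W D {1..6} O6 \<and>
      \<not> cx_iso W D {1..6} (alex_dual {1..6} O6) \<and>
      \<not> cx_iso W D {1..5} J1 \<and>
      \<not> cx_iso W D {1..5} J1s \<and>
      \<not> cx_iso W D {1..5} J2 \<and>
      (\<forall>n\<ge>1. \<not> cx_iso W D {0..n+1} (bdry_plus_pt n)))"

end

theory Submission
  imports Defs
begin

text \<open>Let \<open>a b c d\<close> be the induced square and let \<open>u\<close> be any other non-ghost vertex.
  Locating the forbidden minors in links of faces (\<open>\<partial>\<Delta>\<^sub>1 \<sqcup> {v}\<close>, \<open>P\<^sub>4\<close>, \<open>J\<^sub>1\<close> and
  \<open>J\<^sub>2\<close>) shows first that \<open>u\<close> is adjacent to all four corners and then that it spans the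
  four triangles over the edges, i.e. \<open>u\<close> is a cone point over the square. Two cone points
  \<open>u, w\<close> are adjacent, as otherwise \<open>{a,c}, {b,d}, {u,w}\<close> span an octahedron \<open>O\<^sub>6\<close>, and then
  \<open>w\<close> is a cone point over the square in the link of \<open>u\<close>. The same argument relative to a
  face \<open>R\<close> gives, by induction, that every edge of the square together with all remaining
  non-ghost vertices is a face, while the two missing diagonals exclude every other face.\<close>

section \<open>Minors realised in links\<close>

definition has_minor :: "'a set \<Rightarrow> 'a set set \<Rightarrow> 'b set \<Rightarrow> 'b set set \<Rightarrow> bool" where
  "has_minor V C I T \<longleftrightarrow> (\<exists>W D. is_minor V C W D \<and> cx_iso W D I T)"

lemma simplicial_complex_subset_closed:
  "simplicial_complex V C \<Longrightarrow> F \<in> C \<Longrightarrow> G \<subseteq> F \<Longrightarrow> G \<in> C"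
  unfolding simplicial_complex_def by blast

lemma simplicial_complex_face_subset:
  "simplicial_complex V C \<Longrightarrow> F \<in> C \<Longrightarrow> F \<subseteq> V"
  unfolding simplicial_complex_def by blast

text \<open>An injection \<open>g\<close> of \<open>I\<close> into the link of the face \<open>R\<close> whose images of faces are
  exactly the faces of \<open>T\<close> exhibits \<open>T\<close> as the minor \<open>link\<^sub>R (C \ S)\<close>, where \<open>S\<close> deletes every
  vertex outside \<open>R \<union> g ` I\<close>.\<close>
lemma has_minor_if_link_embedding:
  assumes sc: "simplicial_complex V C" and R: "R \<in> C"
    and inj: "inj_on g I" and gI: "g ` I \<subseteq> V - R"
    and faces: "\<And>G. G \<subseteq> I \<Longrightarrow> g ` G \<union> R \<in> C \<longleftrightarrow> G \<in> T"
  shows "has_minor V C I T"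
proof -
  define S where "S = V - R - g ` I"
  define D where "D = {F - R | F. F \<in> C \<and> F \<subseteq> V - S \<and> R \<subseteq> F}"
  have RV: "R \<subseteq> V" using simplicial_complex_face_subset[OF sc R] .
  have "is_minor V C (g ` I) D"
    unfolding is_minor_def D_def
    by (rule exI[of _ S], rule exI[of _ R]) (use R RV gI in \<open>auto simp: S_def\<close>)
  moreover have "cx_iso (g ` I) D I T"
  proof -
    define f where "f = the_inv_into I g"
    have bij: "bij_betw f (g ` I) I"
      unfolding f_def using inj by (simp add: bij_betw_the_inv_into inj_on_imp_bij_betw)
    have "F \<in> D \<longleftrightarrow> f ` F \<in> T" if F: "F \<subseteq> g ` I" for F
    proof -
      have fF: "f ` F \<subseteq> I" using F bij by (auto simp: bij_betw_def)
      have "g (f x) = x" if "x \<in> F" for x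
        using F inj that unfolding f_def by (meson f_the_inv_into_f subsetD)
      then have gfF: "g ` f ` F = F" unfolding image_image by simp
      have "F \<in> D \<longleftrightarrow> F \<union> R \<in> C"
      proof
        assume "F \<in> D"
        then obtain F' where "F = F' - R" "F' \<in> C" "R \<subseteq> F'" unfolding D_def by blast
        then show "F \<union> R \<in> C" by (simp add: Un_absorb2)
      next
        assume FR: "F \<union> R \<in> C"
        have "F \<union> R \<subseteq> V - S" "F \<union> R - R = F" using F RV gI unfolding S_def by auto
        then show "F \<in> D" unfolding D_def using FR by blast
      qed
      also have "\<dots> \<longleftrightarrow> f ` F \<in> T" using faces[OF fF] gfF by simp
      finally show ?thesis .
    qed
    then show ?thesis unfolding cx_iso_def using bij by blast
  qed
  ultimately show ?thesis unfolding has_minor_def by blast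
qed

text \<open>Vertex \<open>k + j\<close> of the target is sent to \<open>xs ! j\<close>; \<open>Phi\<close> lists the facets and \<open>N\<close> the
  minimal non-faces of \<open>T\<close>, so only these have to be checked in the link.\<close>
lemma has_minor_if_link_list:
  assumes sc: "simplicial_complex V C" and R: "R \<in> C"
    and xs: "distinct xs" "set xs \<subseteq> V - R"
    and I: "I = {k..k + n}" "length xs = Suc n"
    and T_facets: "\<And>G. G \<subseteq> I \<Longrightarrow> G \<in> T \<longleftrightarrow> (\<exists>\<phi>\<in>Phi. G \<subseteq> \<phi>)"
    and T_nonfaces: "\<And>G. G \<subseteq> I \<Longrightarrow> G \<notin> T \<Longrightarrow> \<exists>\<nu>\<in>N. \<nu> \<subseteq> G"
    and facets: "\<forall>\<phi>\<in>Phi. (\<lambda>i. xs ! (i - k)) ` \<phi> \<union> R \<in> C"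
    and nonfaces: "\<forall>\<nu>\<in>N. (\<lambda>i. xs ! (i - k)) ` \<nu> \<union> R \<notin> C"
  shows "has_minor V C I T"
proof (rule has_minor_if_link_embedding[OF sc R])
  let ?g = "\<lambda>i. xs ! (i - k)"
  show "inj_on ?g I"
  proof (rule inj_onI)
    fix i j assume "i \<in> I" "j \<in> I" "?g i = ?g j"
    then have "i - k = j - k" using nth_eq_iff_index_eq[OF xs(1), of "i - k" "j - k"] I by auto
    then show "i = j" using \<open>i \<in> I\<close> \<open>j \<in> I\<close> I by auto
  qed
  show "?g ` I \<subseteq> V - R"
  proof
    fix y assume "y \<in> ?g ` I"
    then obtain i where "i \<in> I" "y = xs ! (i - k)" by blast
    then have "i - k < length xs" using I by auto
    then have "y \<in> set xs" using \<open>y = xs ! (i - k)\<close> by simp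
    then show "y \<in> V - R" using xs(2) by blast
  qed
  fix G assume G: "G \<subseteq> I"
  show "?g ` G \<union> R \<in> C \<longleftrightarrow> G \<in> T"
  proof
    assume GR: "?g ` G \<union> R \<in> C"
    show "G \<in> T"
    proof (rule ccontr)
      assume "G \<notin> T"
      then obtain \<nu> where "\<nu> \<in> N" "\<nu> \<subseteq> G" using T_nonfaces G by blast
      moreover from \<open>\<nu> \<subseteq> G\<close> have "?g ` \<nu> \<union> R \<subseteq> ?g ` G \<union> R" by blast
      ultimately show False
        using nonfaces simplicial_complex_subset_closed[OF sc GR] by blast
    qed
  next
    assume "G \<in> T"
    then obtain \<phi> where "\<phi> \<in> Phi" "G \<subseteq> \<phi>" using T_facets G by blast
    moreover from \<open>G \<subseteq> \<phi>\<close> have "?g ` G \<union> R \<subseteq> ?g ` \<phi> \<union> R" by blast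
    ultimately show "?g ` G \<union> R \<in> C"
      using facets simplicial_complex_subset_closed[OF sc] by blast
  qed
qed

lemma small_nat_intervals:
  "{0..2::nat} = {0,1,2}" "{1..4::nat} = {1,2,3,4}" "{1..5::nat} = {1,2,3,4,5}"
  "{1..6::nat} = {1,2,3,4,5,6}"
  by auto

lemma P4_nonface_contains:
  "G \<subseteq> {1..4} \<Longrightarrow> G \<notin> P4 \<Longrightarrow> \<exists>\<nu>\<in>{{1,3},{1,4},{2,4::nat}}. \<nu> \<subseteq> G"
  unfolding P4_def gen_def small_nat_intervals
  by (cases "1 \<in> G"; cases "2 \<in> G"; cases "3 \<in> G"; cases "4 \<in> G"; auto simp: subset_iff)

lemma J1_nonface_contains:
  "G \<subseteq> {1..5} \<Longrightarrow> G \<notin> J1 \<Longrightarrow> \<exists>\<nu>\<in>{{1,3},{1,4},{2,5::nat}}. \<nu> \<subseteq> G"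
  unfolding J1_def gen_def small_nat_intervals
  by (cases "1\<in>G"; cases "2\<in>G"; cases "3\<in>G"; cases "4\<in>G"; cases "5\<in>G"; auto simp: subset_iff)

lemma J2_nonface_contains:
  "G \<subseteq> {1..5} \<Longrightarrow> G \<notin> J2 \<Longrightarrow> \<exists>\<nu>\<in>{{1,3},{2,4},{1,2,5},{3,4,5::nat}}. \<nu> \<subseteq> G"
  unfolding J2_def gen_def small_nat_intervals
  by (cases "1\<in>G"; cases "2\<in>G"; cases "3\<in>G"; cases "4\<in>G"; cases "5\<in>G"; auto simp: subset_iff)

lemma O6_face_iff:
  assumes G: "G \<subseteq> {1..6}"
  shows "G \<in> O6 \<longleftrightarrow>
    (\<exists>\<phi>\<in>{{1,3,5},{1,3,6},{1,4,5},{1,4,6},{2,3,5},{2,3,6},{2,4,5},{2,4,6::nat}}. G \<subseteq> \<phi>)"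
proof
  assume "G \<in> O6"
  then have "G \<subseteq> {if 1 \<in> G then 1 else 2, if 3 \<in> G then 3 else 4, if 5 \<in> G then 5 else 6}"
    using G unfolding O6_def small_nat_intervals by auto
  then show "\<exists>\<phi>\<in>{{1,3,5},{1,3,6},{1,4,5},{1,4,6},{2,3,5},{2,3,6},{2,4,5},{2,4,6}}. G \<subseteq> \<phi>"
    by (rule rev_bexI[rotated]) simp
next
  assume "\<exists>\<phi>\<in>{{1,3,5},{1,3,6},{1,4,5},{1,4,6},{2,3,5},{2,3,6},{2,4,5},{2,4,6}}. G \<subseteq> \<phi>"
  then show "G \<in> O6" using G unfolding O6_def by auto
qed

lemma O6_nonface_contains:
  "G \<subseteq> {1..6} \<Longrightarrow> G \<notin> O6 \<Longrightarrow> \<exists>\<nu>\<in>{{1,2},{3,4},{5,6::nat}}. \<nu> \<subseteq> G"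
  unfolding O6_def by auto

lemma bdry_plus_pt_1_eq: "bdry_plus_pt 1 = {{}, {0}, {1}, {2}}"
proof -
  have proper_subsets: "F \<subset> {0..1::nat} \<longleftrightarrow> F = {} \<or> F = {0} \<or> F = {1}" for F
  proof -
    have "{0..1::nat} = {0,1}" by auto
    then show ?thesis by (cases "0 \<in> F"; cases "1 \<in> F") auto
  qed
  show ?thesis
    unfolding bdry_plus_pt_def
    by (rule set_eqI)
      (simp only: Un_iff mem_Collect_eq singleton_iff insert_iff empty_iff proper_subsets
        one_add_one, blast)
qed

lemma bdry_plus_pt_1_face_iff:
  "G \<subseteq> {0..2} \<Longrightarrow> G \<in> bdry_plus_pt 1 \<longleftrightarrow> (\<exists>\<phi>\<in>{{0},{1},{2::nat}}. G \<subseteq> \<phi>)"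
  unfolding bdry_plus_pt_1_eq small_nat_intervals
  by (cases "0 \<in> G"; cases "1 \<in> G"; cases "2 \<in> G"; auto simp: subset_iff)

lemma bdry_plus_pt_1_nonface_contains:
  "G \<subseteq> {0..2} \<Longrightarrow> G \<notin> bdry_plus_pt 1 \<Longrightarrow> \<exists>\<nu>\<in>{{0,1},{0,2},{1,2::nat}}. \<nu> \<subseteq> G"
  unfolding bdry_plus_pt_1_eq small_nat_intervals
  by (cases "0 \<in> G"; cases "1 \<in> G"; cases "2 \<in> G"; auto simp: subset_iff)

section \<open>Forbidden configurations in links\<close>

locale beta_avoiding_complex =
  fixes V :: "'a set" and C :: "'a set set"
  assumes complex: "simplicial_complex V C" and avoiding: "beta_avoiding V C"
begin

lemma face_subset: "F \<in> C \<Longrightarrow> G \<subseteq> F \<Longrightarrow> G \<in> C"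
  using simplicial_complex_subset_closed[OF complex] .

lemma nonface_superset: "F \<notin> C \<Longrightarrow> F \<subseteq> G \<Longrightarrow> G \<notin> C"
  using face_subset by blast

lemma no_link_three_isolated:
  assumes R: "R \<in> C" and xs: "distinct [x0,x1,x2]" "{x0,x1,x2} \<subseteq> V - R"
    and "{x0} \<union> R \<in> C" "{x1} \<union> R \<in> C" "{x2} \<union> R \<in> C"
    and "{x0,x1} \<union> R \<notin> C" "{x0,x2} \<union> R \<notin> C" "{x1,x2} \<union> R \<notin> C"
  shows False
proof -
  have "has_minor V C {0..2} (bdry_plus_pt 1)"
    by (rule has_minor_if_link_list[OF complex R xs(1) _ _ _ bdry_plus_pt_1_face_iff
          bdry_plus_pt_1_nonface_contains, where k=0]) (use assms in simp_all)
  then obtain W D where "is_minor V C W D" "cx_iso W D {0..1+1} (bdry_plus_pt 1)"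
    unfolding has_minor_def one_add_one by blast
  then show False using avoiding unfolding beta_avoiding_def by blast
qed

lemma no_link_P4:
  assumes R: "R \<in> C" and xs: "distinct [x1,x2,x3,x4]" "{x1,x2,x3,x4} \<subseteq> V - R"
    and "{x1,x2} \<union> R \<in> C" "{x2,x3} \<union> R \<in> C" "{x3,x4} \<union> R \<in> C"
    and "{x1,x3} \<union> R \<notin> C" "{x1,x4} \<union> R \<notin> C" "{x2,x4} \<union> R \<notin> C"
  shows False
proof -
  have "has_minor V C {1..4} P4"
    by (rule has_minor_if_link_list[OF complex R xs(1) _ _ _ _ P4_nonface_contains,
          where k=1 and Phi="{{1,2},{2,3},{3,4}}"])
      (use assms in \<open>simp_all add: P4_def gen_def\<close>)
  then show False using avoiding unfolding beta_avoiding_def has_minor_def by blast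
qed

lemma no_link_J1:
  assumes R: "R \<in> C" and xs: "distinct [x1,x2,x3,x4,x5]" "{x1,x2,x3,x4,x5} \<subseteq> V - R"
    and "{x1,x2} \<union> R \<in> C" "{x1,x5} \<union> R \<in> C" "{x2,x3,x4} \<union> R \<in> C" "{x3,x4,x5} \<union> R \<in> C"
    and "{x1,x3} \<union> R \<notin> C" "{x1,x4} \<union> R \<notin> C" "{x2,x5} \<union> R \<notin> C"
  shows False
proof -
  have "has_minor V C {1..5} J1"
    by (rule has_minor_if_link_list[OF complex R xs(1) _ _ _ _ J1_nonface_contains,
          where k=1 and Phi="{{1,2},{1,5},{2,3,4},{3,4,5}}"])
      (use assms in \<open>simp_all add: J1_def gen_def\<close>)
  then show False using avoiding unfolding beta_avoiding_def has_minor_def by blast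
qed

lemma no_link_J2:
  assumes R: "R \<in> C" and xs: "distinct [x1,x2,x3,x4,x5]" "{x1,x2,x3,x4,x5} \<subseteq> V - R"
    and "{x1,x2} \<union> R \<in> C" "{x2,x3,x5} \<union> R \<in> C" "{x3,x4} \<union> R \<in> C" "{x1,x4,x5} \<union> R \<in> C"
    and "{x1,x3} \<union> R \<notin> C" "{x2,x4} \<union> R \<notin> C" "{x1,x2,x5} \<union> R \<notin> C" "{x3,x4,x5} \<union> R \<notin> C"
  shows False
proof -
  have "has_minor V C {1..5} J2"
    by (rule has_minor_if_link_list[OF complex R xs(1) _ _ _ _ J2_nonface_contains,
          where k=1 and Phi="{{1,2},{2,3,5},{3,4},{1,4,5}}"])
      (use assms in \<open>simp_all add: J2_def gen_def\<close>)
  then show False using avoiding unfolding beta_avoiding_def has_minor_def by blast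
qed

lemma no_link_O6:
  assumes R: "R \<in> C" and xs: "distinct [x1,x2,x3,x4,x5,x6]" "{x1,x2,x3,x4,x5,x6} \<subseteq> V - R"
    and "{x1,x3,x5} \<union> R \<in> C" "{x1,x3,x6} \<union> R \<in> C" "{x1,x4,x5} \<union> R \<in> C" "{x1,x4,x6} \<union> R \<in> C"
      "{x2,x3,x5} \<union> R \<in> C" "{x2,x3,x6} \<union> R \<in> C" "{x2,x4,x5} \<union> R \<in> C" "{x2,x4,x6} \<union> R \<in> C"
    and "{x1,x2} \<union> R \<notin> C" "{x3,x4} \<union> R \<notin> C" "{x5,x6} \<union> R \<notin> C"
  shows False
proof -
  have "has_minor V C {1..6} O6"
    by (rule has_minor_if_link_list[OF complex R xs(1) _ _ _ O6_face_iff O6_nonface_contains,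
          where k=1]) (use assms in simp_all)
  then show False using avoiding unfolding beta_avoiding_def has_minor_def by blast
qed

lemma link_vertex_adjacent_to_nonedge:
  assumes R: "R \<in> C" and xs: "distinct [x,y,u]" "{x,y,u} \<subseteq> V - R"
    and "{x} \<union> R \<in> C" "{y} \<union> R \<in> C" "{u} \<union> R \<in> C" "{x,y} \<union> R \<notin> C"
  shows "{u,x} \<union> R \<in> C \<or> {u,y} \<union> R \<in> C"
  using no_link_three_isolated[OF R xs] assms(4-) by (auto simp: insert_commute)

end

section \<open>Cone vertices over an induced square\<close>

definition square_in_link :: "'a set set \<Rightarrow> 'a set \<Rightarrow> 'a \<Rightarrow> 'a \<Rightarrow> 'a \<Rightarrow> 'a \<Rightarrow> bool" where
  "square_in_link C R a b c d \<longleftrightarrow>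
    {a,b} \<union> R \<in> C \<and> {b,c} \<union> R \<in> C \<and> {c,d} \<union> R \<in> C \<and> {d,a} \<union> R \<in> C"

lemma square_in_link_rotate: "square_in_link C R b c d a \<longleftrightarrow> square_in_link C R a b c d"
  unfolding square_in_link_def by blast

lemma square_in_link_reflect: "square_in_link C R c b a d \<longleftrightarrow> square_in_link C R a b c d"
  unfolding square_in_link_def by (auto simp: insert_commute)

locale square = beta_avoiding_complex +
  fixes a b c d :: 'a
  assumes distinct: "distinct [a,b,c,d]"
    and diagonal_ac: "{a,c} \<notin> C" and diagonal_bd: "{b,d} \<notin> C"
begin

lemma square_rotate: "square V C b c d a"
  using distinct diagonal_ac diagonal_bd
  by unfold_locales (auto simp: insert_commute)

lemma square_reflect: "square V C c b a d"
  using distinct diagonal_ac diagonal_bd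
  by unfold_locales (auto simp: insert_commute)

lemma diagonal_nonfaces: "{a,c} \<union> X \<notin> C" "{b,d} \<union> X \<notin> C"
  using nonface_superset diagonal_ac diagonal_bd by blast+

text \<open>A vertex of the square lying in \<open>R\<close> would put a diagonal into a face.\<close>
lemma square_in_link_vertices:
  assumes "square_in_link C R a b c d"
  shows "R \<in> C" "{a,b,c,d} \<subseteq> V - R"
proof -
  have faces: "{a,b} \<union> R \<in> C" "{b,c} \<union> R \<in> C" "{c,d} \<union> R \<in> C" "{d,a} \<union> R \<in> C"
    using assms unfolding square_in_link_def by blast+
  show "R \<in> C" using face_subset[OF faces(1)] by blast
  have "{a,b,c,d} \<subseteq> V"
    using faces simplicial_complex_face_subset[OF complex] by blast
  moreover have "a \<notin> R" "b \<notin> R" "c \<notin> R" "d \<notin> R"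
    using face_subset[OF faces(3), of "{a,c}"] face_subset[OF faces(4), of "{b,d}"]
      face_subset[OF faces(1), of "{a,c}"] face_subset[OF faces(2), of "{b,d}"]
      diagonal_ac diagonal_bd by blast+
  ultimately show "{a,b,c,d} \<subseteq> V - R" by blast
qed

lemma square_edges:
  assumes "square_in_link C R a b c d"
  shows "{a,b} \<union> R \<in> C" "{b,c} \<union> R \<in> C" "{c,d} \<union> R \<in> C" "{d,a} \<union> R \<in> C"
  using assms unfolding square_in_link_def by blast+

lemma cone_vertex_link_vertices:
  assumes sq: "square_in_link C R a b c d" and u: "{u} \<union> R \<in> C" "u \<notin> R \<union> {a,b,c,d}"
  shows "distinct [a,b,c,d,u]" "{a,b,c,d,u} \<subseteq> V - R"
  using distinct u square_in_link_vertices(2)[OF sq] simplicial_complex_face_subset[OF complex u(1)]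
  by auto

lemma adjacent_d_if_triangle_abu:
  assumes sq: "square_in_link C R a b c d" and u: "{u} \<union> R \<in> C" "u \<notin> R \<union> {a,b,c,d}"
    and abu: "{a,b,u} \<union> R \<in> C"
  shows "{u,d} \<union> R \<in> C"
proof (rule ccontr)
  assume ud: "{u,d} \<union> R \<notin> C"
  note R = square_in_link_vertices(1)[OF sq] and edges = square_edges[OF sq]
  note dist = cone_vertex_link_vertices[OF sq u]
  have ub: "{u,b} \<union> R \<in> C" by (rule face_subset[OF abu]) auto
  show False
  proof (cases "{u,c} \<union> R \<in> C")
    case False
    show False
      by (rule no_link_P4[OF R, of u b c d])
        (use dist ub edges False ud diagonal_nonfaces in \<open>auto simp: insert_commute\<close>)
  next
    case True
    have "{u,b} \<union> insert c R \<in> C \<or> {u,d} \<union> insert c R \<in> C"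
      by (rule link_vertex_adjacent_to_nonedge)
        (use dist edges True diagonal_nonfaces(2)[of "{c} \<union> R"] face_subset[OF edges(2)] in
          \<open>auto simp: insert_commute\<close>)
    moreover have "{u,d} \<union> insert c R \<notin> C" by (rule nonface_superset[OF ud]) auto
    ultimately have bcu: "{b,u,c} \<union> R \<in> C" by (simp add: insert_commute)
    show False
      by (rule no_link_J1[OF R, of d a b u c])
        (use dist edges abu bcu ud diagonal_nonfaces in \<open>auto simp: insert_commute\<close>)
  qed
qed

lemma cone_vertex_adjacent_d:
  assumes sq: "square_in_link C R a b c d" and u: "{u} \<union> R \<in> C" "u \<notin> R \<union> {a,b,c,d}"
  shows "{u,d} \<union> R \<in> C"
proof (rule ccontr)
  assume ud: "{u,d} \<union> R \<notin> C"
  note R = square_in_link_vertices(1)[OF sq] and edges = square_edges[OF sq]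
  note dist = cone_vertex_link_vertices[OF sq u]
  have "{u,b} \<union> R \<in> C \<or> {u,d} \<union> R \<in> C"
    by (rule link_vertex_adjacent_to_nonedge[OF R])
      (use dist u face_subset[OF edges(1)] face_subset[OF edges(3)] diagonal_nonfaces in auto)
  with ud have ub: "{u,b} \<union> R \<in> C" by blast
  have "{u,a} \<union> insert b R \<in> C \<or> {u,c} \<union> insert b R \<in> C"
    by (rule link_vertex_adjacent_to_nonedge)
      (use dist edges ub diagonal_nonfaces(1)[of "{b} \<union> R"] face_subset[OF edges(1)] in
        \<open>auto simp: insert_commute\<close>)
  then show False
  proof
    assume "{u,a} \<union> insert b R \<in> C"
    then show False
      using adjacent_d_if_triangle_abu[OF sq u] ud by (simp add: insert_commute)
  next
    assume "{u,c} \<union> insert b R \<in> C"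
    moreover note square_in_link_reflect[THEN iffD2, OF sq]
    ultimately show False
      using square.adjacent_d_if_triangle_abu[OF square_reflect, of R u] u ud
      by (auto simp: insert_commute)
  qed
qed

lemma cone_vertex_adjacent:
  assumes sq: "square_in_link C R a b c d" and u: "{u} \<union> R \<in> C" "u \<notin> R \<union> {a,b,c,d}"
  shows "{u,a} \<union> R \<in> C" "{u,b} \<union> R \<in> C" "{u,c} \<union> R \<in> C" "{u,d} \<union> R \<in> C"
proof -
  interpret bcda: square V C b c d a by (rule square_rotate)
  interpret cdab: square V C c d a b by (rule bcda.square_rotate)
  interpret dabc: square V C d a b c by (rule cdab.square_rotate)
  note rot1 = square_in_link_rotate[THEN iffD2, OF sq]
  note rot2 = square_in_link_rotate[THEN iffD2, OF rot1]
  note rot3 = square_in_link_rotate[THEN iffD2, OF rot2]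
  have "u \<notin> R \<union> {b,c,d,a}" "u \<notin> R \<union> {c,d,a,b}" "u \<notin> R \<union> {d,a,b,c}"
    using u(2) by auto
  then show "{u,a} \<union> R \<in> C" "{u,b} \<union> R \<in> C" "{u,c} \<union> R \<in> C" "{u,d} \<union> R \<in> C"
    using bcda.cone_vertex_adjacent_d[OF rot1] cdab.cone_vertex_adjacent_d[OF rot2]
      dabc.cone_vertex_adjacent_d[OF rot3] cone_vertex_adjacent_d[OF sq u] u(1) by blast+
qed

lemma cone_vertex_triangle_abu:
  assumes sq: "square_in_link C R a b c d" and u: "{u} \<union> R \<in> C" "u \<notin> R \<union> {a,b,c,d}"
  shows "{a,b,u} \<union> R \<in> C"
proof (rule ccontr)
  assume abu: "{a,b,u} \<union> R \<notin> C"
  note R = square_in_link_vertices(1)[OF sq] and edges = square_edges[OF sq]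
  note dist = cone_vertex_link_vertices[OF sq u] and adj = cone_vertex_adjacent[OF sq u]
  have "{u,b} \<union> insert a R \<in> C \<or> {u,d} \<union> insert a R \<in> C"
    by (rule link_vertex_adjacent_to_nonedge)
      (use dist edges adj diagonal_nonfaces(2)[of "{a} \<union> R"] face_subset[OF edges(1)] in
        \<open>auto simp: insert_commute\<close>)
  with abu have adu: "{a,d,u} \<union> R \<in> C" by (auto simp: insert_commute)
  have "{u,a} \<union> insert b R \<in> C \<or> {u,c} \<union> insert b R \<in> C"
    by (rule link_vertex_adjacent_to_nonedge)
      (use dist edges adj diagonal_nonfaces(1)[of "{b} \<union> R"] face_subset[OF edges(1)] in
        \<open>auto simp: insert_commute\<close>)
  with abu have bcu: "{b,c,u} \<union> R \<in> C" by (auto simp: insert_commute)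
  show False
  proof (cases "{c,d,u} \<union> R \<in> C")
    case True
    have uR: "insert u R \<in> C" using u(1) by simp
    show False
      by (rule no_link_P4[OF uR, of a d c b])
        (use dist adu True bcu abu diagonal_nonfaces[of "{u} \<union> R"] in
          \<open>auto simp: insert_commute\<close>)
  next
    case False
    show False
      by (rule no_link_J2[OF R, of a b c d u])
        (use dist edges bcu adu abu False diagonal_nonfaces in \<open>auto simp: insert_commute\<close>)
  qed
qed

lemma square_in_link_insert_cone_vertex:
  assumes sq: "square_in_link C R a b c d" and u: "{u} \<union> R \<in> C" "u \<notin> R \<union> {a,b,c,d}"
  shows "square_in_link C (insert u R) a b c d"
proof -
  interpret bcda: square V C b c d a by (rule square_rotate)
  interpret cdab: square V C c d a b by (rule bcda.square_rotate)
  interpret dabc: square V C d a b c by (rule cdab.square_rotate)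
  note rot1 = square_in_link_rotate[THEN iffD2, OF sq]
  note rot2 = square_in_link_rotate[THEN iffD2, OF rot1]
  note rot3 = square_in_link_rotate[THEN iffD2, OF rot2]
  have "u \<notin> R \<union> {b,c,d,a}" "u \<notin> R \<union> {c,d,a,b}" "u \<notin> R \<union> {d,a,b,c}"
    using u(2) by auto
  then have "{a,b,u} \<union> R \<in> C" "{b,c,u} \<union> R \<in> C" "{c,d,u} \<union> R \<in> C" "{d,a,u} \<union> R \<in> C"
    using cone_vertex_triangle_abu[OF sq u] bcda.cone_vertex_triangle_abu[OF rot1]
      cdab.cone_vertex_triangle_abu[OF rot2] dabc.cone_vertex_triangle_abu[OF rot3] u(1)
    by blast+
  then show ?thesis unfolding square_in_link_def by (simp add: insert_commute)
qed

text \<open>Two cone vertices are adjacent, since otherwise the two diagonals and the pair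
  \<open>u, w\<close> form the octahedron \<open>O\<^sub>6\<close>; then \<open>w\<close> is a cone vertex in the link of \<open>u\<close>.\<close>
lemma square_in_link_insert_two_cone_vertices:
  assumes u: "square_in_link C (insert u R) a b c d" "u \<notin> R \<union> {a,b,c,d}"
    and w: "square_in_link C (insert w R) a b c d" "w \<notin> R \<union> {a,b,c,d}"
    and "u \<noteq> w"
  shows "square_in_link C (insert w (insert u R)) a b c d"
proof -
  note Ru = square_in_link_vertices[OF u(1)] and Rw = square_in_link_vertices[OF w(1)]
  have R: "R \<in> C" by (rule face_subset[OF Ru(1)]) auto
  have "u \<in> V" "w \<in> V" using simplicial_complex_face_subset[OF complex] Ru(1) Rw(1) by blast+
  have uw: "{w} \<union> insert u R \<in> C"
  proof (rule ccontr)
    assume nonedge: "{w} \<union> insert u R \<notin> C"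
    show False
      by (rule no_link_O6[OF R, of a c b d u w])
        (use assms nonedge \<open>u \<in> V\<close> \<open>w \<in> V\<close> distinct Ru Rw square_edges[OF u(1)]
          square_edges[OF w(1)] diagonal_nonfaces in \<open>auto simp: insert_commute\<close>)
  qed
  have "w \<notin> insert u R \<union> {a,b,c,d}" using assms by auto
  from square_in_link_insert_cone_vertex[OF u(1) uw this] show ?thesis .
qed

lemma square_in_link_cone_vertices:
  assumes sq: "square_in_link C {} a b c d"
    and U: "finite U" "U \<inter> {a,b,c,d} = {}" "\<forall>u\<in>U. {u} \<in> C"
  shows "square_in_link C U a b c d"
proof -
  have "square_in_link C X a b c d \<and> (\<forall>u\<in>U - X. square_in_link C (insert u X) a b c d)"
    if "X \<subseteq> U" for X
    using finite_subset[OF that U(1)] that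
  proof (induction X rule: finite_induct)
    case empty
    have "square_in_link C {u} a b c d" if "u \<in> U" for u
      using square_in_link_insert_cone_vertex[OF sq, of u] U that by auto
    with sq show ?case by simp
  next
    case (insert x X)
    then have IH: "square_in_link C (insert x X) a b c d"
      "\<forall>u\<in>U - X. square_in_link C (insert u X) a b c d" by auto
    have "square_in_link C (insert u (insert x X)) a b c d" if "u \<in> U - insert x X" for u
      by (rule square_in_link_insert_two_cone_vertices) (use IH that insert U(2) in auto)
    with IH show ?case by blast
  qed
  then show ?thesis by blast
qed

lemma face_iff_in_cone_over_edge:
  assumes sq: "square_in_link C U a b c d" and F: "F \<subseteq> {a,b,c,d} \<union> U"
  shows "F \<in> C \<longleftrightarrow> F \<subseteq> {a,b} \<union> U \<or> F \<subseteq> {b,c} \<union> U \<or> F \<subseteq> {c,d} \<union> U \<or> F \<subseteq> {d,a} \<union> U"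
proof
  assume FC: "F \<in> C"
  have "\<not> {a,c} \<subseteq> F" "\<not> {b,d} \<subseteq> F"
    using face_subset[OF FC] diagonal_ac diagonal_bd by blast+
  then consider "c \<notin> F" "d \<notin> F" | "a \<notin> F" "d \<notin> F" | "a \<notin> F" "b \<notin> F" | "b \<notin> F" "c \<notin> F"
    by blast
  then show "F \<subseteq> {a,b} \<union> U \<or> F \<subseteq> {b,c} \<union> U \<or> F \<subseteq> {c,d} \<union> U \<or> F \<subseteq> {d,a} \<union> U"
    by cases (use F in blast)+
next
  assume "F \<subseteq> {a,b} \<union> U \<or> F \<subseteq> {b,c} \<union> U \<or> F \<subseteq> {c,d} \<union> U \<or> F \<subseteq> {d,a} \<union> U"
  then show "F \<in> C" using square_edges[OF sq] face_subset by blast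
qed

end

lemma cone_C4_face_iff:
  "G \<in> cone_C4 p \<longleftrightarrow> G \<subseteq> {1,2} \<union> {5..4+p} \<or> G \<subseteq> {2,3} \<union> {5..4+p} \<or>
    G \<subseteq> {3,4} \<union> {5..4+p} \<or> G \<subseteq> {1,4} \<union> {5..4+p}"
  unfolding cone_C4_def gen_def by blast

lemma cx_iso_cone_C4:
  assumes U: "finite U" "U \<inter> {a,b,c,d} = {}" and abcd: "distinct [a,b,c,d]"
    and faces: "\<And>F. F \<subseteq> {a,b,c,d} \<union> U \<Longrightarrow>
      F \<in> D \<longleftrightarrow> F \<subseteq> {a,b} \<union> U \<or> F \<subseteq> {b,c} \<union> U \<or> F \<subseteq> {c,d} \<union> U \<or> F \<subseteq> {d,a} \<union> U"
  shows "cx_iso ({a,b,c,d} \<union> U) D {1..4 + card U} (cone_C4 (card U))"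
proof -
  define p where "p = card U"
  obtain k0 where "bij_betw k0 U {0..<p}" using ex_bij_betw_finite_nat[OF U(1)] p_def by blast
  moreover have "bij_betw ((+) 5) {0..<p} {5..4 + p}" by (auto simp: bij_betw_def)
  ultimately have k: "bij_betw ((+) 5 \<circ> k0) U {5..4 + p}" by (rule bij_betw_trans)
  define f where "f x = (if x = a then 1 else if x = b then 2 else if x = c then 3
    else if x = d then 4 else ((+) 5 \<circ> k0) x)" for x
  have "bij_betw f {a,b,c,d} {1,2,3,4}" using abcd by (auto simp: bij_betw_def inj_on_def f_def)
  moreover have "bij_betw f U {5..4 + p}"
    using k by (rule bij_betw_cong[THEN iffD1, rotated]) (use U(2) in \<open>auto simp: f_def\<close>)
  ultimately have "bij_betw f ({a,b,c,d} \<union> U) ({1,2,3,4} \<union> {5..4 + p})"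
    by (rule bij_betw_combine) auto
  moreover have "{1,2,3,4} \<union> {5..4 + p} = {1..4 + p}" by auto
  ultimately have bij: "bij_betw f ({a,b,c,d} \<union> U) {1..4 + p}" by simp
  have iso_faces: "F \<in> D \<longleftrightarrow> f ` F \<in> cone_C4 p" if F: "F \<subseteq> {a,b,c,d} \<union> U" for F
  proof -
    have inj: "inj_on f ({a,b,c,d} \<union> U)" using bij by (rule bij_betw_imp_inj_on)
    have image_subset_image_iff: "f ` F \<subseteq> f ` X \<longleftrightarrow> F \<subseteq> X"
      if X: "X \<subseteq> {a,b,c,d} \<union> U" for X
    proof
      assume "f ` F \<subseteq> f ` X"
      then show "F \<subseteq> X" using inj_on_image_mem_iff[OF inj _ X] F by blast
    qed (rule image_mono)
    have "f a = 1" "f b = 2" "f c = 3" "f d = 4" using abcd by (auto simp: f_def)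
    moreover have "f ` U = {5..4 + p}" using \<open>bij_betw f U {5..4 + p}\<close> by (simp add: bij_betw_def)
    ultimately have edge_images:
      "f ` ({a,b} \<union> U) = {1,2} \<union> {5..4 + p}" "f ` ({b,c} \<union> U) = {2,3} \<union> {5..4 + p}"
      "f ` ({c,d} \<union> U) = {3,4} \<union> {5..4 + p}" "f ` ({d,a} \<union> U) = {1,4} \<union> {5..4 + p}"
      by (simp_all add: image_Un insert_commute)
    show ?thesis
      unfolding faces[OF F] cone_C4_face_iff edge_images[symmetric]
      by (subst (1 2 3 4) image_subset_image_iff) auto
  qed
  show ?thesis unfolding cx_iso_def p_def[symmetric]
    by (intro exI[of _ f] conjI allI impI bij iso_faces)
qed

lemma induced_C4_square:
  assumes "cx_iso W (induced C W) {1..4} C4"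
  obtains a b c d where "W = {a,b,c,d}" "distinct [a,b,c,d]"
    "{a,b} \<in> C" "{b,c} \<in> C" "{c,d} \<in> C" "{d,a} \<in> C" "{a,c} \<notin> C" "{b,d} \<notin> C"
proof -
  obtain h where h: "bij_betw h W {1..4}"
    and faces: "\<And>F. F \<subseteq> W \<Longrightarrow> F \<in> induced C W \<longleftrightarrow> h ` F \<in> C4"
    using assms unfolding cx_iso_def by blast
  define g where "g = inv_into W h"
  have g: "bij_betw g {1..4} W" unfolding g_def using h by (rule bij_betw_inv_into)
  have hg: "h (g i) = i" if "i \<in> {1..4}" for i
    using h that unfolding g_def by (simp add: bij_betw_def f_inv_into_f)
  have W: "W = {g 1, g 2, g 3, g 4}"
    using g unfolding bij_betw_def small_nat_intervals by auto
  have "distinct [g 1, g 2, g 3, g 4]"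
    using g unfolding bij_betw_def small_nat_intervals inj_on_def by auto
  moreover have "G \<in> C \<longleftrightarrow> h ` G \<in> C4" if "G \<subseteq> W" for G
    using faces[OF that] that unfolding induced_def by auto
  moreover have "h ` {g i, g j} = {i, j}" if "i \<in> {1..4}" "j \<in> {1..4}" for i j
    using hg that by simp
  ultimately show thesis
    by (intro that[of "g 1" "g 2" "g 3" "g 4"] W) (auto simp: W C4_def gen_def)
qed

theorem proposition4p4:
  fixes V :: "'a set" and C :: "'a set set"
  assumes "simplicial_complex V C"
    and "beta_avoiding V C"
    and "\<exists>W\<subseteq>V. cx_iso W (induced C W) {1..4} C4"
  shows "\<exists>p::nat. cx_iso (non_ghost V C) (induced C (non_ghost V C)) {1..4+p} (cone_C4 p)"
proof -
  interpret beta_avoiding_complex V C using assms(1,2) by unfold_locales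
  obtain W where "W \<subseteq> V" and "cx_iso W (induced C W) {1..4} C4" using assms(3) by blast
  then obtain a b c d where W: "W = {a,b,c,d}" "W \<subseteq> V" and "distinct [a,b,c,d]"
    and edges: "{a,b} \<in> C" "{b,c} \<in> C" "{c,d} \<in> C" "{d,a} \<in> C" and "{a,c} \<notin> C" "{b,d} \<notin> C"
    by (elim induced_C4_square) blast
  then interpret square V C a b c d by unfold_locales
  define U where "U = non_ghost V C - W"
  have "W \<subseteq> non_ghost V C"
    using W edges face_subset unfolding non_ghost_def by blast
  then have N: "non_ghost V C = {a,b,c,d} \<union> U" unfolding U_def W by blast
  have U: "finite U" "U \<inter> {a,b,c,d} = {}" "\<forall>u\<in>U. {u} \<in> C"
    using complex unfolding U_def W non_ghost_def simplicial_complex_def by (auto intro: finite_subset)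
  have "square_in_link C {} a b c d" using edges unfolding square_in_link_def by simp
  then have cone: "square_in_link C U a b c d" using U by (rule square_in_link_cone_vertices)
  have "cx_iso ({a,b,c,d} \<union> U) (induced C ({a,b,c,d} \<union> U)) {1..4 + card U} (cone_C4 (card U))"
    by (rule cx_iso_cone_C4[OF U(1,2) \<open>distinct [a,b,c,d]\<close>])
      (use face_iff_in_cone_over_edge[OF cone] in \<open>auto simp: induced_def\<close>)
  then show ?thesis unfolding N by blast
qed

end
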